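(* Let $n\ge1$, $\mathcal{X}$ the simplex in $\mathbb{R}^{n+1}$, $\theta$ a kernel, $\Phi$ a Lipschitz continuous smooth function on an open neighborhood of $\mathcal{X}$, and $\eta\ge0$. Let $x(t)$ be an interior solution of the inertial dynamics (ID) that is defined for all $t\ge0$, and let $x^*\in\mathcal{X}$. Assume that for every $\delta>0$ and every $T>0$ there exists an interval $J$ of length at least $T$ such that $\max_\alpha|x_\alpha(t)-x^*_\alpha|<\delta$ for all $t\in J$. Then $$\frac{\partial\Phi}{\partial x_\alpha}(x^* )=\frac{\partial\Phi}{\partial x_\beta}(x^* )\quad\text{for all }\alpha,\beta\in\mathrm{supp}(x^* ).$$
   Context: $\mathcal{X}=\{x\in\mathbb{R}^{n+1}:x_\alpha\ge0,\sum_\alpha x_\alpha=1\}$ with relative interior $\mathcal{X}^\circ$; $\mathrm{supp}(x)=\{\alpha:x_\alpha>0\}$. A kernel is a $C^\infty$ function $\theta:[0,\infty)\to\mathbb{R}\cup\{+\infty\}$ with $\theta(x)<\infty$ for $x>0$, $\lim_{x\to0^+}\theta'(x)=-\infty$, $\theta''>0$, $\theta'''<0$ on $(0,\infty)$. With $\theta''_\alpha=\theta''(x_\alpha)$, $\theta'''_\alpha=\theta'''(x_\alpha)$, $\Theta''=(\sum_\beta1/\theta''_\beta)^{-1}$, $v_\alpha=\partial\Phi/\partial x_\alpha$, the inertial dynamics (ID) on $\mathcal{X}^\circ$ are $$\ddot x_\alpha=\frac{1}{\theta''_\alpha}\Big[v_\alpha-\sum_{\beta}\frac{\Theta''}{\theta''_\beta}v_\beta\Big]-\frac{1}{2\theta''_\alpha}\Big[\theta'''_\alpha\dot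 x_\alpha^2-\sum_\beta\frac{\Theta''}{\theta''_\beta}\theta'''_\beta\dot x_\beta^2\Big]-\eta\dot x_\alpha.$$ *)

theory Defs
  imports "HOL-Analysis.Analysis"
begin

text \<open>Points of R^(n+1) are vectors real^'n with CARD('n) = n+1.\<close>

definition prob_simplex :: "(real ^ 'n) set" where
  "prob_simplex = {x. (\<forall>a. x $ a \<ge> 0) \<and> (\<Sum>a\<in>UNIV. x $ a) = 1}"

definition prob_simplex_interior :: "(real ^ 'n) set" where
  "prob_simplex_interior = {x. (\<forall>a. x $ a > 0) \<and> (\<Sum>a\<in>UNIV. x $ a) = 1}"

definition pdiff :: "'n \<Rightarrow> (real ^ 'n \<Rightarrow> real) \<Rightarrow> real ^ 'n \<Rightarrow> real" where
  "pdiff a f x = (THE d. ((\<lambda>t. f (x + t *\<^sub>R axis a 1)) has_real_derivative d) (at 0))"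

fun iter_pdiff :: "'n list \<Rightarrow> (real ^ 'n \<Rightarrow> real) \<Rightarrow> real ^ 'n \<Rightarrow> real" where
  "iter_pdiff [] f = f"
| "iter_pdiff (a # as) f = pdiff a (iter_pdiff as f)"

definition smooth_on_pd :: "(real ^ 'n) set \<Rightarrow> (real ^ 'n \<Rightarrow> real) \<Rightarrow> bool" where
  "smooth_on_pd U f \<longleftrightarrow>
     (\<forall>as. continuous_on U (iter_pdiff as f) \<and>
       (\<forall>x\<in>U. \<forall>a. ((\<lambda>t. iter_pdiff as f (x + t *\<^sub>R axis a 1))
                         has_real_derivative pdiff a (iter_pdiff as f) x) (at 0)))"

text \<open>A kernel, represented by its (finite) values on (0,oo); the value at 0 plays no role.\<close>
definition kernel :: "(real \<Rightarrow> real) \<Rightarrow> bool" where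
  "kernel \<theta> \<longleftrightarrow>
     (\<forall>k. \<forall>x>0. ((deriv ^^ k) \<theta> has_real_derivative (deriv ^^ Suc k) \<theta> x) (at x)) \<and>
     filterlim (deriv \<theta>) at_bot (at_right 0) \<and>
     (\<forall>x>0. (deriv ^^ 2) \<theta> x > 0) \<and>
     (\<forall>x>0. (deriv ^^ 3) \<theta> x < 0)"

definition ID_rhs ::
  "(real \<Rightarrow> real) \<Rightarrow> (real ^ 'n \<Rightarrow> real) \<Rightarrow> real \<Rightarrow> real ^ 'n \<Rightarrow> real ^ 'n \<Rightarrow> real ^ 'n" where
  "ID_rhs \<theta> \<Phi> \<eta> x xd =
    (let th2 = (\<lambda>a. (deriv ^^ 2) \<theta> (x $ a));
         th3 = (\<lambda>a. (deriv ^^ 3) \<theta> (x $ a));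
         Th2 = 1 / (\<Sum>b\<in>UNIV. 1 / th2 b);
         v = (\<lambda>a. pdiff a \<Phi> x)
     in \<chi> a. (1 / th2 a) * (v a - (\<Sum>b\<in>UNIV. Th2 / th2 b * v b))
            - (1 / (2 * th2 a)) * (th3 a * (xd $ a)\<^sup>2 - (\<Sum>b\<in>UNIV. Th2 / th2 b * th3 b * (xd $ b)\<^sup>2))
            - \<eta> * xd $ a)"

end

theory Submission
  imports Defs
begin

text \<open>
  Suppose two coordinates \<alpha>, \<beta> in the support of x* had \<partial>_\<alpha>\<Phi>(x*) > \<partial>_\<beta>\<Phi>(x*).  On a long time
  window during which the trajectory stays close to x*, the momentum difference
  \<theta>''(x_\<alpha>) x_\<alpha>' - \<theta>''(x_\<beta>) x_\<beta>' then grows at a rate bounded below by a positive constant,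
  because by (ID) its derivative is the payoff gap up to terms that are small when the velocities are.
  The velocities are indeed small: the trajectory barely moves on the window, and (ID) bounds
  x_\<alpha>'' from above by A + B (x_\<alpha>')^2, so a Landau-type inequality for exp (- B x_\<alpha>) forces x_\<alpha>'
  to be small.  A bounded quantity cannot grow linearly over arbitrarily long windows.\<close>

lemma has_vector_derivative_vec_nth:
  fixes f :: "real \<Rightarrow> real ^ 'n"
  assumes "(f has_vector_derivative f') F"
  shows "((\<lambda>s. f s $ i) has_real_derivative f' $ i) F"
proof -
  have "((\<lambda>s. f s $ i) has_derivative (\<lambda>t. (t *\<^sub>R f') $ i)) F"
    using bounded_linear.has_derivative[OF bounded_linear_vec_nth assms[unfolded has_vector_derivative_def]] .
  moreover have "(\<lambda>t. (t *\<^sub>R f') $ i) = (*) (f' $ i)"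
    by (auto simp: mult.commute)
  ultimately show ?thesis
    by (simp add: has_field_derivative_def)
qed

lemma taylor_lower_bound:
  fixes f f' f'' :: "real \<Rightarrow> real"
  assumes "0 \<le> h"
    and f': "\<And>s. p \<le> s \<Longrightarrow> s \<le> p + h \<Longrightarrow> (f has_real_derivative f' s) (at s)"
    and f'': "\<And>s. p \<le> s \<Longrightarrow> s \<le> p + h \<Longrightarrow> (f' has_real_derivative f'' s) (at s)"
    and K: "\<And>s. p \<le> s \<Longrightarrow> s \<le> p + h \<Longrightarrow> - K \<le> f'' s"
  shows "f p + f' p * h - K * h\<^sup>2 / 2 \<le> f (p + h)"
proof -
  have f'_lower: "f' p - K * (s - p) \<le> f' s" if "p \<le> s" "s \<le> p + h" for s
  proof -
    have "(\<lambda>u. f' u + K * u) p \<le> (\<lambda>u. f' u + K * u) s"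
    proof (rule DERIV_nonneg_imp_nondecreasing[OF \<open>p \<le> s\<close>])
      fix u assume "p \<le> u" "u \<le> s"
      then show "\<exists>D. ((\<lambda>u. f' u + K * u) has_real_derivative D) (at u) \<and> 0 \<le> D"
        using f''[of u] K[of u] that by (auto intro!: exI[of _ "f'' u + K"] derivative_eq_intros)
    qed
    then show ?thesis
      by (simp add: algebra_simps)
  qed
  define g where "g u = f u - f' p * u + K * (u - p)\<^sup>2 / 2" for u
  have "g p \<le> g (p + h)"
  proof (rule DERIV_nonneg_imp_nondecreasing[of p "p + h" g])
    fix u assume "p \<le> u" "u \<le> p + h"
    then show "\<exists>D. (g has_real_derivative D) (at u) \<and> 0 \<le> D"
      unfolding g_def using f'[of u] f'_lower[of u]
      by (auto intro!: exI[of _ "f' u - f' p + K * (u - p)"] derivative_eq_intros simp: field_simps)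
  qed (use \<open>0 \<le> h\<close> in simp)
  then show ?thesis
    by (simp add: g_def algebra_simps power2_eq_square)
qed

text \<open>A Landau-type inequality: the forward Taylor bound and its reflection bound \<open>f' p\<close> from above
  and from below.\<close>

lemma abs_deriv_le_oscillation:
  fixes f f' f'' :: "real \<Rightarrow> real"
  assumes "0 < h"
    and f': "\<And>s. p - h \<le> s \<Longrightarrow> s \<le> p + h \<Longrightarrow> (f has_real_derivative f' s) (at s)"
    and f'': "\<And>s. p - h \<le> s \<Longrightarrow> s \<le> p + h \<Longrightarrow> (f' has_real_derivative f'' s) (at s)"
    and K: "\<And>s. p - h \<le> s \<Longrightarrow> s \<le> p + h \<Longrightarrow> - K \<le> f'' s"
    and osc: "\<And>s. p - h \<le> s \<Longrightarrow> s \<le> p + h \<Longrightarrow> \<bar>f s - f p\<bar> \<le> \<rho>"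
  shows "\<bar>f' p\<bar> \<le> \<rho> / h + K * h / 2"
proof -
  have fwd: "f p + f' p * h - K * h\<^sup>2 / 2 \<le> f (p + h)"
    by (rule taylor_lower_bound[where f'' = f'']) (use assms in auto)
  have "(\<lambda>s. f (- s)) (- p) + (\<lambda>s. - f' (- s)) (- p) * h - K * h\<^sup>2 / 2 \<le> (\<lambda>s. f (- s)) (- p + h)"
  proof (rule taylor_lower_bound[where f'' = "\<lambda>s. f'' (- s)"])
    fix s assume s: "- p \<le> s" "s \<le> - p + h"
    show "((\<lambda>s. f (- s)) has_real_derivative - f' (- s)) (at s)"
      using f'[of "- s"] s by (simp add: DERIV_mirror)
    have "((\<lambda>s. f' (- s)) has_real_derivative - f'' (- s)) (at s)"
      using f''[of "- s"] s by (simp add: DERIV_mirror)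
    then show "((\<lambda>s. - f' (- s)) has_real_derivative f'' (- s)) (at s)"
      using DERIV_minus by fastforce
    show "- K \<le> f'' (- s)"
      using K[of "- s"] s by simp
  qed (use \<open>0 < h\<close> in simp)
  then have bwd: "f p - f' p * h - K * h\<^sup>2 / 2 \<le> f (p - h)"
    by simp
  have "f (p + h) - f p \<le> \<rho>" "f (p - h) - f p \<le> \<rho>"
    using osc[of "p + h"] osc[of "p - h"] \<open>0 < h\<close> by auto
  with fwd bwd have "\<bar>f' p\<bar> * h \<le> \<rho> + K * h\<^sup>2 / 2"
    by (auto simp: abs_if)
  with \<open>0 < h\<close> show ?thesis
    by (simp add: field_simps power2_eq_square)
qed

lemma abs_exp_neg_diff_le:
  fixes u w :: real
  assumes "0 \<le> u" "0 \<le> w"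
  shows "\<bar>exp (- u) - exp (- w)\<bar> \<le> \<bar>u - w\<bar>"
proof -
  have *: "exp (- w) - exp (- u) \<le> u - w" if "0 \<le> w" "w \<le> u" for u w :: real
  proof -
    have "exp (- w) - exp (- u) = exp (- w) * (1 - exp (- (u - w)))"
      by (simp add: algebra_simps flip: exp_add)
    also have "\<dots> \<le> 1 - exp (- (u - w))"
      using that by (intro mult_left_le_one_le) auto
    also have "\<dots> \<le> u - w"
      using exp_ge_add_one_self[of "- (u - w)"] by linarith
    finally show ?thesis .
  qed
  show ?thesis
    using *[of w u] *[of u w] assms by (cases "w \<le> u") auto
qed

text \<open>Writing \<open>f = exp (- B * z)\<close> turns the one-sided bound \<open>z'' \<le> A + B * z'^2\<close> into the lower
  bound \<open>f'' \<ge> - A * B\<close> that the Landau-type inequality needs.\<close>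

lemma abs_velocity_le_oscillation:
  fixes z v w :: "real \<Rightarrow> real"
  assumes "0 < h" "0 < B" "0 \<le> A"
    and z': "\<And>s. p - h \<le> s \<Longrightarrow> s \<le> p + h \<Longrightarrow> (z has_real_derivative v s) (at s)"
    and v': "\<And>s. p - h \<le> s \<Longrightarrow> s \<le> p + h \<Longrightarrow> (v has_real_derivative w s) (at s)"
    and w: "\<And>s. p - h \<le> s \<Longrightarrow> s \<le> p + h \<Longrightarrow> w s \<le> A + B * (v s)\<^sup>2"
    and z_nonneg: "\<And>s. p - h \<le> s \<Longrightarrow> s \<le> p + h \<Longrightarrow> 0 \<le> z s"
    and "z p \<le> 1"
    and osc: "\<And>s. p - h \<le> s \<Longrightarrow> s \<le> p + h \<Longrightarrow> \<bar>z s - z p\<bar> \<le> \<rho>"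
  shows "\<bar>v p\<bar> \<le> exp B * (\<rho> / h + A * h / 2)"
proof -
  define f where "f s = exp (- B * z s)" for s
  have f': "(f has_real_derivative - B * v s * f s) (at s)" if "p - h \<le> s" "s \<le> p + h" for s
    unfolding f_def using z'[OF that] by (auto intro!: derivative_eq_intros)
  have f'': "((\<lambda>s. - B * v s * f s) has_real_derivative - B * f s * (w s - B * (v s)\<^sup>2)) (at s)"
    if "p - h \<le> s" "s \<le> p + h" for s
    using v'[OF that] f'[OF that]
    by (auto intro!: derivative_eq_intros simp: algebra_simps power2_eq_square)
  have f''_lower: "- (B * A) \<le> - B * f s * (w s - B * (v s)\<^sup>2)" if "p - h \<le> s" "s \<le> p + h" for s
  proof -
    have "0 < f s" "f s \<le> 1"
      unfolding f_def using \<open>0 < B\<close> z_nonneg[OF that] by auto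
    have "B * f s * (w s - B * (v s)\<^sup>2) \<le> B * f s * A"
      using w[OF that] \<open>0 < B\<close> \<open>0 < f s\<close> by (intro mult_left_mono) auto
    also have "\<dots> \<le> B * A"
      using \<open>f s \<le> 1\<close> \<open>0 < B\<close> \<open>0 \<le> A\<close> \<open>0 < f s\<close> by (simp add: mult_left_le_one_le mult.assoc)
    finally show ?thesis
      by simp
  qed
  have f_osc: "\<bar>f s - f p\<bar> \<le> B * \<rho>" if "p - h \<le> s" "s \<le> p + h" for s
  proof -
    have "\<bar>f s - f p\<bar> \<le> \<bar>B * z s - B * z p\<bar>"
      unfolding f_def using abs_exp_neg_diff_le[of "B * z s" "B * z p"] \<open>0 < B\<close> z_nonneg[OF that]
        z_nonneg[of p] \<open>0 < h\<close> by simp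
    also have "\<dots> \<le> B * \<rho>"
      using osc[OF that] \<open>0 < B\<close> by (simp add: abs_mult flip: right_diff_distrib)
    finally show ?thesis .
  qed
  have "\<bar>- B * v p * f p\<bar> \<le> B * \<rho> / h + B * A * h / 2"
    by (rule abs_deriv_le_oscillation[OF \<open>0 < h\<close> f' f'' f''_lower f_osc])
  also have "\<dots> = B * (\<rho> / h + A * h / 2)"
    by (simp add: algebra_simps)
  finally have "\<bar>v p\<bar> * f p \<le> \<rho> / h + A * h / 2"
    using \<open>0 < B\<close> by (simp add: abs_mult f_def)
  moreover have "exp (- B) \<le> f p"
    unfolding f_def using \<open>z p \<le> 1\<close> \<open>0 < B\<close> by simp
  ultimately have "\<bar>v p\<bar> * exp (- B) \<le> \<rho> / h + A * h / 2"
    by (meson abs_ge_zero mult_left_mono order_trans)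
  then show ?thesis
    by (simp add: exp_minus field_simps)
qed

lemma DERIV_lower_bound_imp_increase:
  fixes y y' :: "real \<Rightarrow> real"
  assumes "p \<le> q"
    and y': "\<And>s. p \<le> s \<Longrightarrow> s \<le> q \<Longrightarrow> (y has_real_derivative y' s) (at s)"
    and lower: "\<And>s. p \<le> s \<Longrightarrow> s \<le> q \<Longrightarrow> \<kappa> \<le> y' s"
  shows "\<kappa> * (q - p) \<le> y q - y p"
proof -
  define g where "g s = y s - \<kappa> * s" for s
  have "g p \<le> g q"
  proof (rule DERIV_nonneg_imp_nondecreasing[of p q g])
    fix s assume "p \<le> s" "s \<le> q"
    then show "\<exists>D. (g has_real_derivative D) (at s) \<and> 0 \<le> D"
      unfolding g_def using y'[of s] lower[of s]
      by (auto intro!: exI[of _ "y' s - \<kappa>"] derivative_eq_intros)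
  qed (fact \<open>p \<le> q\<close>)
  then show ?thesis
    by (simp add: g_def algebra_simps)
qed

lemma exists_pos_quadratic_le:
  fixes a b c :: real
  assumes "0 \<le> a" "0 \<le> b" "0 < c"
  shows "\<exists>\<epsilon>>0. a * \<epsilon>\<^sup>2 + b * \<epsilon> \<le> c"
proof -
  define \<epsilon> where "\<epsilon> = min 1 (c / (a + b + 1))"
  have "0 < \<epsilon>" "\<epsilon> \<le> 1"
    unfolding \<epsilon>_def using assms by auto
  have "\<epsilon> \<le> c / (a + b + 1)"
    by (simp add: \<epsilon>_def)
  then have "\<epsilon> * (a + b + 1) \<le> c"
    using assms by (simp add: le_divide_eq add_nonneg_pos)
  moreover have "a * \<epsilon>\<^sup>2 \<le> a * \<epsilon>"
    using \<open>0 < \<epsilon>\<close> \<open>\<epsilon> \<le> 1\<close> \<open>0 \<le> a\<close>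
    by (intro mult_left_mono) (simp_all add: power2_eq_square mult_right_le_one_le)
  ultimately show ?thesis
    using \<open>0 < \<epsilon>\<close> by (intro exI[of _ \<epsilon>]) (auto simp: algebra_simps)
qed

lemma exists_scales_le:
  fixes A E \<epsilon> :: real
  assumes "0 \<le> A" "0 < E" "0 < \<epsilon>"
  shows "\<exists>h>0. \<exists>\<rho>>0. E * (\<rho> / h + A * h / 2) \<le> \<epsilon>"
proof -
  define h where "h = \<epsilon> / (E * (A + 1))"
  define \<rho> where "\<rho> = h * \<epsilon> / (2 * E)"
  have "0 < h" "0 < \<rho>"
    unfolding h_def \<rho>_def using assms by simp_all
  have "E * (\<rho> / h + A * h / 2) = E * (\<rho> / h) + A * (E * h) / 2"
    by (simp add: algebra_simps)
  also have "\<dots> = \<epsilon> / 2 + A * (\<epsilon> / (A + 1)) / 2"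
    unfolding \<rho>_def h_def using \<open>0 < h\<close> \<open>0 < E\<close> \<open>0 \<le> A\<close> by simp
  also have "\<dots> \<le> \<epsilon>"
    using assms by (simp add: field_simps add_nonneg_pos)
  finally have "E * (\<rho> / h + A * h / 2) \<le> \<epsilon>" .
  with \<open>0 < h\<close> \<open>0 < \<rho>\<close> show ?thesis
    by blast
qed

lemma prob_simplex_nth_le_one:
  assumes "x \<in> prob_simplex"
  shows "x $ a \<le> 1"
proof -
  have "x $ a \<le> (\<Sum>b\<in>UNIV. x $ b)"
    using assms by (intro member_le_sum) (auto simp: prob_simplex_def)
  with assms show ?thesis
    by (simp add: prob_simplex_def)
qed

lemma prob_simplex_interior_subset: "prob_simplex_interior \<subseteq> prob_simplex"
  by (auto simp: prob_simplex_def prob_simplex_interior_def less_imp_le)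

lemma kernel_deriv2_has_derivative:
  assumes "kernel \<theta>" "0 < s"
  shows "((deriv ^^ 2) \<theta> has_real_derivative (deriv ^^ 3) \<theta> s) (at s)"
  using assms unfolding kernel_def by (metis numeral_2_eq_2 numeral_3_eq_3)

lemma kernel_deriv3_isCont:
  assumes "kernel \<theta>" "0 < s"
  shows "isCont ((deriv ^^ 3) \<theta>) s"
  using assms unfolding kernel_def by (metis DERIV_isCont)

lemma kernel_deriv2_pos: "kernel \<theta> \<Longrightarrow> 0 < s \<Longrightarrow> 0 < (deriv ^^ 2) \<theta> s"
  and kernel_deriv3_neg: "kernel \<theta> \<Longrightarrow> 0 < s \<Longrightarrow> (deriv ^^ 3) \<theta> s < 0"
  unfolding kernel_def by blast+

lemma kernel_bounds_on_interval:
  assumes "kernel \<theta>" "0 < m" "m \<le> M"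
  obtains L2 U2 U3 where "0 < L2" "0 < U3"
    and "\<And>s. m \<le> s \<Longrightarrow> s \<le> M \<Longrightarrow>
           L2 \<le> (deriv ^^ 2) \<theta> s \<and> (deriv ^^ 2) \<theta> s \<le> U2 \<and> \<bar>(deriv ^^ 3) \<theta> s\<bar> \<le> U3"
proof -
  have "isCont ((deriv ^^ 2) \<theta>) s \<and> isCont ((deriv ^^ 3) \<theta>) s" if "m \<le> s" for s
    using kernel_deriv2_has_derivative[OF assms(1), of s] kernel_deriv3_isCont[OF assms(1), of s]
      that \<open>0 < m\<close> by (auto dest: DERIV_isCont)
  then have "continuous_on {m..M} ((deriv ^^ 2) \<theta>)" "continuous_on {m..M} ((deriv ^^ 3) \<theta>)"
    by (auto intro!: continuous_at_imp_continuous_on)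
  then have "continuous_on {m..M} ((deriv ^^ 2) \<theta>)" "continuous_on {m..M} (\<lambda>s. \<bar>(deriv ^^ 3) \<theta> s\<bar>)"
    by (auto intro: continuous_intros)
  then obtain s2 S2 S3 where s: "s2 \<in> {m..M}" "S3 \<in> {m..M}"
    and bounds: "\<forall>s\<in>{m..M}. (deriv ^^ 2) \<theta> s2 \<le> (deriv ^^ 2) \<theta> s \<and> (deriv ^^ 2) \<theta> s \<le> (deriv ^^ 2) \<theta> S2
           \<and> \<bar>(deriv ^^ 3) \<theta> s\<bar> \<le> \<bar>(deriv ^^ 3) \<theta> S3\<bar>"
    using continuous_attains_inf[OF compact_Icc] continuous_attains_sup[OF compact_Icc] \<open>m \<le> M\<close>
    by (metis atLeastAtMost_iff empty_iff order.refl)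
  show ?thesis
  proof (rule that)
    show "0 < (deriv ^^ 2) \<theta> s2" "0 < \<bar>(deriv ^^ 3) \<theta> S3\<bar>"
      using s assms kernel_deriv2_pos[OF assms(1), of s2] kernel_deriv3_neg[OF assms(1), of S3] by auto
    show "(deriv ^^ 2) \<theta> s2 \<le> (deriv ^^ 2) \<theta> s \<and> (deriv ^^ 2) \<theta> s \<le> (deriv ^^ 2) \<theta> S2
           \<and> \<bar>(deriv ^^ 3) \<theta> s\<bar> \<le> \<bar>(deriv ^^ 3) \<theta> S3\<bar>" if "m \<le> s" "s \<le> M" for s
      using bounds that by auto
  qed
qed

lemma smooth_on_pd_isCont_pdiff:
  assumes "smooth_on_pd U f" "open U" "x \<in> U"
  shows "isCont (pdiff a f) x"
proof -
  have "continuous_on U (iter_pdiff [a] f)"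
    using assms(1) unfolding smooth_on_pd_def by blast
  with assms(2,3) show ?thesis
    by (simp add: continuous_on_eq_continuous_at)
qed

lemma pdiff_bounds_near:
  fixes \<Phi> :: "real ^ 'n \<Rightarrow> real"
  assumes "smooth_on_pd U \<Phi>" "open U" "xs \<in> U" "pdiff \<beta> \<Phi> xs < pdiff \<alpha> \<Phi> xs"
  obtains \<delta> V where "0 < \<delta>" "0 \<le> V"
    and "\<And>y. (\<And>i. \<bar>y $ i - xs $ i\<bar> < \<delta>) \<Longrightarrow>
           (\<forall>g. \<bar>pdiff g \<Phi> y\<bar> \<le> V) \<and>
           (pdiff \<alpha> \<Phi> xs - pdiff \<beta> \<Phi> xs) / 2 \<le> pdiff \<alpha> \<Phi> y - pdiff \<beta> \<Phi> y"
proof -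
  define r where "r = (pdiff \<alpha> \<Phi> xs - pdiff \<beta> \<Phi> xs) / 4"
  have "0 < r"
    using assms(4) by (simp add: r_def)
  have "(pdiff g \<Phi> \<longlongrightarrow> pdiff g \<Phi> xs) (nhds xs)" for g
    using smooth_on_pd_isCont_pdiff[OF assms(1-3)] tendsto_at_iff_tendsto_nhds isCont_def by blast
  then have "\<forall>\<^sub>F y in nhds xs. \<forall>g. dist (pdiff g \<Phi> y) (pdiff g \<Phi> xs) < r"
    using \<open>0 < r\<close> by (intro eventually_all_finite) (simp add: tendsto_iff)
  then obtain d where "0 < d" and d: "\<And>y. dist y xs < d \<Longrightarrow> \<forall>g. \<bar>pdiff g \<Phi> y - pdiff g \<Phi> xs\<bar> < r"
    by (auto simp: eventually_nhds_metric dist_real_def)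
  define V where "V = (\<Sum>g\<in>UNIV. \<bar>pdiff g \<Phi> xs\<bar>) + r"
  show thesis
  proof (rule that)
    show "0 < d / CARD('n)"
      using \<open>0 < d\<close> by simp
    show "0 \<le> V"
      using \<open>0 < r\<close> by (simp add: V_def sum_nonneg)
    fix y assume y: "\<And>i. \<bar>y $ i - xs $ i\<bar> < d / CARD('n)"
    have "dist y xs \<le> (\<Sum>i\<in>UNIV. \<bar>(y - xs) $ i\<bar>)"
      unfolding dist_norm by (rule norm_le_l1_cart)
    also have "\<dots> < (\<Sum>i\<in>(UNIV :: 'n set). d / CARD('n))"
      using y by (intro sum_strict_mono) auto
    also have "\<dots> = d"
      by simp
    finally have close: "\<bar>pdiff g \<Phi> y - pdiff g \<Phi> xs\<bar> < r" for g
      using d by blast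
    have le_sum: "\<bar>pdiff g \<Phi> xs\<bar> \<le> (\<Sum>g\<in>UNIV. \<bar>pdiff g \<Phi> xs\<bar>)" for g
      by (rule member_le_sum) auto
    have "\<bar>pdiff g \<Phi> y\<bar> \<le> V" for g
      using close[of g] le_sum[of g] unfolding V_def by linarith
    moreover have "(pdiff \<alpha> \<Phi> xs - pdiff \<beta> \<Phi> xs) / 2 \<le> pdiff \<alpha> \<Phi> y - pdiff \<beta> \<Phi> y"
      using close[of \<alpha>] close[of \<beta>] unfolding r_def abs_less_iff by argo
    ultimately show "(\<forall>g. \<bar>pdiff g \<Phi> y\<bar> \<le> V) \<and>
        (pdiff \<alpha> \<Phi> xs - pdiff \<beta> \<Phi> xs) / 2 \<le> pdiff \<alpha> \<Phi> y - pdiff \<beta> \<Phi> y"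
      by blast
  qed
qed

lemma abs_weighted_sum_le:
  fixes w v :: "'a \<Rightarrow> real"
  assumes "\<And>b. b \<in> A \<Longrightarrow> 0 \<le> w b" "sum w A = 1" "\<And>b. b \<in> A \<Longrightarrow> \<bar>v b\<bar> \<le> V"
  shows "\<bar>\<Sum>b\<in>A. w b * v b\<bar> \<le> V"
proof -
  have "\<bar>\<Sum>b\<in>A. w b * v b\<bar> \<le> (\<Sum>b\<in>A. w b * \<bar>v b\<bar>)"
    using sum_abs[of "\<lambda>b. w b * v b" A] assms(1) by (simp add: abs_mult)
  also have "\<dots> \<le> (\<Sum>b\<in>A. w b * V)"
    using assms(1,3) by (intro sum_mono mult_left_mono) auto
  also have "\<dots> = V"
    using assms(2) by (simp flip: sum_distrib_right)
  finally show ?thesis .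
qed

text \<open>The weights \<open>\<Theta>''/\<theta>''_\<beta>\<close> of (ID): both sums in (ID) are averages with respect to them.\<close>

definition ID_weight :: "(real \<Rightarrow> real) \<Rightarrow> real ^ 'n \<Rightarrow> 'n \<Rightarrow> real" where
  "ID_weight \<theta> x b = (1 / (\<Sum>c\<in>UNIV. 1 / (deriv ^^ 2) \<theta> (x $ c))) / (deriv ^^ 2) \<theta> (x $ b)"

lemma ID_weight_pos:
  assumes "\<And>c. 0 < (deriv ^^ 2) \<theta> (x $ c)"
  shows "0 < ID_weight \<theta> x b"
  using assms by (simp add: ID_weight_def sum_pos)

lemma sum_ID_weight:
  assumes "\<And>c. 0 < (deriv ^^ 2) \<theta> (x $ c)"
  shows "(\<Sum>b\<in>UNIV. ID_weight \<theta> x b) = 1"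
proof -
  have "0 < (\<Sum>c\<in>UNIV. 1 / (deriv ^^ 2) \<theta> (x $ c))"
    using assms by (simp add: sum_pos)
  then show ?thesis
    by (simp add: ID_weight_def divide_inverse flip: sum_distrib_left)
qed

lemma ID_rhs_nth:
  "ID_rhs \<theta> \<Phi> \<eta> x xd $ a =
     (pdiff a \<Phi> x - (\<Sum>b\<in>UNIV. ID_weight \<theta> x b * pdiff b \<Phi> x)) / (deriv ^^ 2) \<theta> (x $ a)
     - ((deriv ^^ 3) \<theta> (x $ a) * (xd $ a)\<^sup>2
         - (\<Sum>b\<in>UNIV. ID_weight \<theta> x b * (deriv ^^ 3) \<theta> (x $ b) * (xd $ b)\<^sup>2))
       / (2 * (deriv ^^ 2) \<theta> (x $ a))
     - \<eta> * xd $ a"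
  by (simp add: ID_rhs_def ID_weight_def Let_def)

lemma ID_rhs_nth_le:
  fixes x xd :: "real ^ 'n"
  assumes \<theta>2: "\<And>b. 0 < (deriv ^^ 2) \<theta> (x $ b)" and \<theta>3: "\<And>b. (deriv ^^ 3) \<theta> (x $ b) < 0"
    and V: "\<And>b. \<bar>pdiff b \<Phi> x\<bar> \<le> V"
    and L2: "0 < L2" "L2 \<le> (deriv ^^ 2) \<theta> (x $ a)"
    and U3: "- (deriv ^^ 3) \<theta> (x $ a) \<le> U3"
    and "0 \<le> \<eta>"
  shows "ID_rhs \<theta> \<Phi> \<eta> x xd $ a \<le> (2 * V / L2 + \<eta> / 2) + (U3 / (2 * L2) + \<eta> / 2) * (xd $ a)\<^sup>2"
proof -
  define S where "S = (\<Sum>b\<in>UNIV. ID_weight \<theta> x b * pdiff b \<Phi> x)"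
  define R where "R = (\<Sum>b\<in>UNIV. ID_weight \<theta> x b * (deriv ^^ 3) \<theta> (x $ b) * (xd $ b)\<^sup>2)"
  have "\<bar>S\<bar> \<le> V"
    unfolding S_def using ID_weight_pos[OF \<theta>2] sum_ID_weight[OF \<theta>2] V
    by (intro abs_weighted_sum_le) (auto simp: less_imp_le)
  then have payoff: "(pdiff a \<Phi> x - S) / (deriv ^^ 2) \<theta> (x $ a) \<le> 2 * V / L2"
    using V[of a] L2 by (intro frac_le) auto
  have "ID_weight \<theta> x b * (deriv ^^ 3) \<theta> (x $ b) * (xd $ b)\<^sup>2 \<le> 0" for b
    using mult_pos_neg[OF ID_weight_pos[OF \<theta>2] \<theta>3] by (simp add: mult_nonpos_nonneg less_imp_le)
  then have "R \<le> 0"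
    unfolding R_def by (rule sum_nonpos)
  then have "R - (deriv ^^ 3) \<theta> (x $ a) * (xd $ a)\<^sup>2 \<le> U3 * (xd $ a)\<^sup>2"
    using U3 mult_right_mono[OF U3 zero_le_power2[of "xd $ a"]] by simp
  then have inertia: "(R - (deriv ^^ 3) \<theta> (x $ a) * (xd $ a)\<^sup>2) / (2 * (deriv ^^ 2) \<theta> (x $ a))
      \<le> U3 * (xd $ a)\<^sup>2 / (2 * L2)"
    using L2 U3 \<theta>3[of a] by (intro frac_le) auto
  have "0 \<le> \<eta> * (1 + xd $ a)\<^sup>2"
    using \<open>0 \<le> \<eta>\<close> by simp
  then have friction: "- \<eta> * xd $ a \<le> \<eta> / 2 + \<eta> / 2 * (xd $ a)\<^sup>2"
    by (simp add: power2_eq_square algebra_simps)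
  have "ID_rhs \<theta> \<Phi> \<eta> x xd $ a = (pdiff a \<Phi> x - S) / (deriv ^^ 2) \<theta> (x $ a)
      + (R - (deriv ^^ 3) \<theta> (x $ a) * (xd $ a)\<^sup>2) / (2 * (deriv ^^ 2) \<theta> (x $ a)) - \<eta> * xd $ a"
    unfolding ID_rhs_nth S_def R_def by (simp add: diff_divide_distrib)
  with payoff inertia friction show ?thesis
    by (simp add: algebra_simps)
qed

lemma deriv2_mult_ID_rhs_nth:
  assumes "(deriv ^^ 2) \<theta> (x $ a) \<noteq> 0"
  shows "(deriv ^^ 2) \<theta> (x $ a) * ID_rhs \<theta> \<Phi> \<eta> x xd $ a =
     pdiff a \<Phi> x - (\<Sum>b\<in>UNIV. ID_weight \<theta> x b * pdiff b \<Phi> x)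
     - ((deriv ^^ 3) \<theta> (x $ a) * (xd $ a)\<^sup>2
         - (\<Sum>b\<in>UNIV. ID_weight \<theta> x b * (deriv ^^ 3) \<theta> (x $ b) * (xd $ b)\<^sup>2)) / 2
     - \<eta> * ((deriv ^^ 2) \<theta> (x $ a) * xd $ a)"
  using assms unfolding ID_rhs_nth by (simp add: field_simps)

locale ID_trajectory =
  fixes \<theta> :: "real \<Rightarrow> real"
    and \<Phi> :: "real ^ 'n \<Rightarrow> real"
    and \<eta> :: real
    and x xd :: "real \<Rightarrow> real ^ 'n"
  assumes kernel: "kernel \<theta>"
    and eta_nonneg: "\<eta> \<ge> 0"
    and interior: "\<forall>t\<ge>0. x t \<in> prob_simplex_interior"
    and dx: "\<forall>t\<ge>0. (x has_vector_derivative xd t) (at t within {0..})"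
    and ddx: "\<forall>t\<ge>0. (xd has_vector_derivative ID_rhs \<theta> \<Phi> \<eta> (x t) (xd t)) (at t within {0..})"
begin

lemma x_pos: "0 \<le> t \<Longrightarrow> 0 < x t $ g"
  using interior by (simp add: prob_simplex_interior_def)

lemma x_le_one: "0 \<le> t \<Longrightarrow> x t $ g \<le> 1"
  using interior prob_simplex_interior_subset prob_simplex_nth_le_one by blast

lemma x_nth_has_derivative:
  assumes "0 < t"
  shows "((\<lambda>s. x s $ g) has_real_derivative xd t $ g) (at t)"
proof -
  have "at t within {0..} = at t"
    using assms by (intro at_within_interior) simp
  with dx[rule_format, of t] assms have "(x has_vector_derivative xd t) (at t)"
    by simp
  then show ?thesis
    by (rule has_vector_derivative_vec_nth)
qed

lemma xd_nth_has_derivative: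
  assumes "0 < t"
  shows "((\<lambda>s. xd s $ g) has_real_derivative ID_rhs \<theta> \<Phi> \<eta> (x t) (xd t) $ g) (at t)"
proof -
  have "at t within {0..} = at t"
    using assms by (intro at_within_interior) simp
  with ddx[rule_format, of t] assms have "(xd has_vector_derivative ID_rhs \<theta> \<Phi> \<eta> (x t) (xd t)) (at t)"
    by simp
  then show ?thesis
    by (rule has_vector_derivative_vec_nth)
qed

lemma momentum_has_derivative:
  assumes "0 < t"
  shows "((\<lambda>s. (deriv ^^ 2) \<theta> (x s $ g) * xd s $ g) has_real_derivative
     (deriv ^^ 3) \<theta> (x t $ g) * (xd t $ g)\<^sup>2 + (deriv ^^ 2) \<theta> (x t $ g) * ID_rhs \<theta> \<Phi> \<eta> (x t) (xd t) $ g) (at t)"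
proof -
  have "((\<lambda>s. (deriv ^^ 2) \<theta> (x s $ g)) has_real_derivative (deriv ^^ 3) \<theta> (x t $ g) * xd t $ g) (at t)"
    using kernel_deriv2_has_derivative[OF kernel x_pos] x_nth_has_derivative assms
    by (intro DERIV_chain2) auto
  from DERIV_mult[OF this xd_nth_has_derivative[OF assms]] show ?thesis
    by (simp add: power2_eq_square algebra_simps)
qed

lemma abs_velocity_le:
  assumes "0 < h" "h < p" "0 < B" "0 \<le> A"
    and accel: "\<And>s. p - h \<le> s \<Longrightarrow> s \<le> p + h \<Longrightarrow> ID_rhs \<theta> \<Phi> \<eta> (x s) (xd s) $ g \<le> A + B * (xd s $ g)\<^sup>2"
    and osc: "\<And>s. p - h \<le> s \<Longrightarrow> s \<le> p + h \<Longrightarrow> \<bar>x s $ g - x p $ g\<bar> \<le> \<rho>"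
  shows "\<bar>xd p $ g\<bar> \<le> exp B * (\<rho> / h + A * h / 2)"
  using assms x_nth_has_derivative xd_nth_has_derivative x_pos x_le_one
  by (intro abs_velocity_le_oscillation[where z = "\<lambda>s. x s $ g" and w = "\<lambda>s. ID_rhs \<theta> \<Phi> \<eta> (x s) (xd s) $ g"])
    (auto simp: less_imp_le)

text \<open>While the velocities of \<open>\<alpha>\<close> and \<open>\<beta>\<close> stay below \<open>\<epsilon>\<close>, the momentum difference stays below
  \<open>2 U2 \<epsilon>\<close> in absolute value, yet by (ID) it grows at rate at least \<open>c / 4\<close>.\<close>

lemma momentum_gap_interval_bound:
  assumes "0 < p" "p \<le> q"
    and speed: "\<And>s g. p \<le> s \<Longrightarrow> s \<le> q \<Longrightarrow> g \<in> {\<alpha>, \<beta>} \<Longrightarrow> \<bar>xd s $ g\<bar> \<le> \<epsilon>"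
    and \<theta>2: "\<And>s g. p \<le> s \<Longrightarrow> s \<le> q \<Longrightarrow> g \<in> {\<alpha>, \<beta>} \<Longrightarrow> (deriv ^^ 2) \<theta> (x s $ g) \<le> U2"
    and \<theta>3: "\<And>s. p \<le> s \<Longrightarrow> s \<le> q \<Longrightarrow> \<bar>(deriv ^^ 3) \<theta> (x s $ \<alpha>)\<bar> \<le> U3"
    and gap: "\<And>s. p \<le> s \<Longrightarrow> s \<le> q \<Longrightarrow> c / 2 \<le> pdiff \<alpha> \<Phi> (x s) - pdiff \<beta> \<Phi> (x s)"
    and small: "U3 * \<epsilon>\<^sup>2 + 2 * \<eta> * U2 * \<epsilon> \<le> c / 4"
  shows "c / 4 * (q - p) \<le> 4 * U2 * \<epsilon>"
proof -
  define y where "y s = (deriv ^^ 2) \<theta> (x s $ \<alpha>) * xd s $ \<alpha> - (deriv ^^ 2) \<theta> (x s $ \<beta>) * xd s $ \<beta>" for s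
  have pos: "0 < (deriv ^^ 2) \<theta> (x s $ g)" "(deriv ^^ 3) \<theta> (x s $ g) < 0" if "p \<le> s" for s g
    using kernel_deriv2_pos[OF kernel] kernel_deriv3_neg[OF kernel] x_pos that \<open>0 < p\<close> by auto
  have y_bound: "\<bar>y s\<bar> \<le> 2 * U2 * \<epsilon>" if "p \<le> s" "s \<le> q" for s
  proof -
    have "\<bar>(deriv ^^ 2) \<theta> (x s $ g) * xd s $ g\<bar> \<le> U2 * \<epsilon>" if "g \<in> {\<alpha>, \<beta>}" for g
      using pos \<theta>2 speed \<open>p \<le> s\<close> \<open>s \<le> q\<close> that
      by (simp add: abs_mult mult_mono' less_imp_le)
    from this[of \<alpha>] this[of \<beta>] show ?thesis
      unfolding y_def by (simp add: abs_le_iff)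
  qed
  have "c / 4 * (q - p) \<le> y q - y p"
  proof (rule DERIV_lower_bound_imp_increase[OF \<open>p \<le> q\<close>])
    fix s assume s: "p \<le> s" "s \<le> q"
    let ?y' = "(deriv ^^ 3) \<theta> (x s $ \<alpha>) * (xd s $ \<alpha>)\<^sup>2 + (deriv ^^ 2) \<theta> (x s $ \<alpha>) * ID_rhs \<theta> \<Phi> \<eta> (x s) (xd s) $ \<alpha>
      - ((deriv ^^ 3) \<theta> (x s $ \<beta>) * (xd s $ \<beta>)\<^sup>2 + (deriv ^^ 2) \<theta> (x s $ \<beta>) * ID_rhs \<theta> \<Phi> \<eta> (x s) (xd s) $ \<beta>)"
    have nz: "(deriv ^^ 2) \<theta> (x s $ g) \<noteq> 0" for g
      using pos(1)[OF s(1)] by (metis less_irrefl)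
    show "(y has_real_derivative ?y') (at s)"
      unfolding y_def using s \<open>0 < p\<close> by (intro DERIV_diff momentum_has_derivative) auto
    have "?y' = (pdiff \<alpha> \<Phi> (x s) - pdiff \<beta> \<Phi> (x s)) + (deriv ^^ 3) \<theta> (x s $ \<alpha>) * (xd s $ \<alpha>)\<^sup>2 / 2
        - (deriv ^^ 3) \<theta> (x s $ \<beta>) * (xd s $ \<beta>)\<^sup>2 / 2 - \<eta> * y s"
      unfolding deriv2_mult_ID_rhs_nth[OF nz] y_def by (simp add: field_simps)
    moreover have "\<bar>(deriv ^^ 3) \<theta> (x s $ \<alpha>) * (xd s $ \<alpha>)\<^sup>2\<bar> \<le> U3 * \<epsilon>\<^sup>2"
      unfolding abs_mult abs_power2 using \<theta>3[OF s] power_mono[OF speed[OF s, of \<alpha>] abs_ge_zero, of 2]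
      by (intro mult_mono) auto
    moreover have "(deriv ^^ 3) \<theta> (x s $ \<beta>) * (xd s $ \<beta>)\<^sup>2 \<le> 0"
      using pos(2)[OF s(1), of \<beta>] by (simp add: mult_nonpos_nonneg)
    moreover have "\<eta> * y s \<le> 2 * \<eta> * U2 * \<epsilon>"
      using mult_left_mono[OF order_trans[OF abs_ge_self y_bound[OF s]] eta_nonneg] by (simp add: mult_ac)
    ultimately show "c / 4 \<le> ?y'"
      using gap[OF s] small unfolding abs_le_iff by linarith
  qed
  then show ?thesis
    using y_bound[of p] y_bound[of q] \<open>p \<le> q\<close> by (simp add: abs_le_iff)
qed

lemma payoff_gap_window_bound:
  fixes V L2 U3 :: real
  defines "A \<equiv> 2 * V / L2 + \<eta> / 2" and "B \<equiv> U3 / (2 * L2) + \<eta> / 2"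
  assumes "0 \<le> a" "0 < h" "4 * h \<le> T" "0 < L2" "0 < U3" "0 \<le> V"
    and \<theta>_bounds: "\<And>t g. t \<in> {a..a+T} \<Longrightarrow> g \<in> {\<alpha>, \<beta>} \<Longrightarrow>
      L2 \<le> (deriv ^^ 2) \<theta> (x t $ g) \<and> (deriv ^^ 2) \<theta> (x t $ g) \<le> U2 \<and> \<bar>(deriv ^^ 3) \<theta> (x t $ g)\<bar> \<le> U3"
    and payoffs: "\<And>t. t \<in> {a..a+T} \<Longrightarrow>
      (\<forall>b. \<bar>pdiff b \<Phi> (x t)\<bar> \<le> V) \<and> c / 2 \<le> pdiff \<alpha> \<Phi> (x t) - pdiff \<beta> \<Phi> (x t)"
    and osc: "\<And>s t g. s \<in> {a..a+T} \<Longrightarrow> t \<in> {a..a+T} \<Longrightarrow> g \<in> {\<alpha>, \<beta>} \<Longrightarrow> \<bar>x s $ g - x t $ g\<bar> \<le> \<rho>"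
    and scales: "exp B * (\<rho> / h + A * h / 2) \<le> \<epsilon>"
    and small: "U3 * \<epsilon>\<^sup>2 + 2 * \<eta> * U2 * \<epsilon> \<le> c / 4"
  shows "c / 4 * (T - 4 * h) \<le> 4 * U2 * \<epsilon>"
proof -
  have "0 \<le> A" "0 < B"
    using \<open>0 < L2\<close> \<open>0 < U3\<close> \<open>0 \<le> V\<close> eta_nonneg by (simp_all add: A_def B_def add_pos_nonneg)
  have accel: "ID_rhs \<theta> \<Phi> \<eta> (x t) (xd t) $ g \<le> A + B * (xd t $ g)\<^sup>2"
    if "t \<in> {a..a+T}" "g \<in> {\<alpha>, \<beta>}" for t g
    unfolding A_def B_def
  proof (rule ID_rhs_nth_le)
    show "0 < (deriv ^^ 2) \<theta> (x t $ b)" "(deriv ^^ 3) \<theta> (x t $ b) < 0" for b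
      using kernel_deriv2_pos[OF kernel] kernel_deriv3_neg[OF kernel] x_pos[of t] that(1) \<open>0 \<le> a\<close> by auto
    show "\<bar>pdiff b \<Phi> (x t)\<bar> \<le> V" for b
      using payoffs[OF that(1)] by blast
    show "L2 \<le> (deriv ^^ 2) \<theta> (x t $ g)" "- (deriv ^^ 3) \<theta> (x t $ g) \<le> U3"
      using \<theta>_bounds[OF that] by auto
  qed (use \<open>0 < L2\<close> eta_nonneg in auto)
  have inner: "s \<in> {a..a+T}" if "a + 2 * h \<le> s" "s \<le> a + T - 2 * h" for s
    using that \<open>0 < h\<close> by auto
  have speed: "\<bar>xd p $ g\<bar> \<le> \<epsilon>" if "a + 2 * h \<le> p" "p \<le> a + T - 2 * h" "g \<in> {\<alpha>, \<beta>}" for p g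
  proof -
    have "\<bar>xd p $ g\<bar> \<le> exp B * (\<rho> / h + A * h / 2)"
    proof (rule abs_velocity_le[OF \<open>0 < h\<close> _ \<open>0 < B\<close> \<open>0 \<le> A\<close>])
      fix s assume "p - h \<le> s" "s \<le> p + h"
      then have "s \<in> {a..a+T}" "p \<in> {a..a+T}"
        using that \<open>0 < h\<close> by auto
      with accel osc that(3) show "ID_rhs \<theta> \<Phi> \<eta> (x s) (xd s) $ g \<le> A + B * (xd s $ g)\<^sup>2"
        "\<bar>x s $ g - x p $ g\<bar> \<le> \<rho>"
        by blast+
    qed (use that \<open>0 \<le> a\<close> \<open>0 < h\<close> in auto)
    with scales show ?thesis
      by linarith
  qed
  have "c / 4 * ((a + T - 2 * h) - (a + 2 * h)) \<le> 4 * U2 * \<epsilon>"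
  proof (rule momentum_gap_interval_bound[OF _ _ speed _ _ _ small])
    fix s g assume "a + 2 * h \<le> s" "s \<le> a + T - 2 * h" "g \<in> {\<alpha>, \<beta>}"
    then show "(deriv ^^ 2) \<theta> (x s $ g) \<le> U2"
      using \<theta>_bounds[OF inner] by blast
  next
    fix s assume "a + 2 * h \<le> s" "s \<le> a + T - 2 * h"
    then show "\<bar>(deriv ^^ 3) \<theta> (x s $ \<alpha>)\<bar> \<le> U3" "c / 2 \<le> pdiff \<alpha> \<Phi> (x s) - pdiff \<beta> \<Phi> (x s)"
      using \<theta>_bounds[OF inner, of s \<alpha>] payoffs[OF inner] by auto
  qed (use \<open>0 \<le> a\<close> \<open>0 < h\<close> \<open>4 * h \<le> T\<close> in auto)
  then show ?thesis
    by (simp add: algebra_simps)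
qed

lemma recurrent_point_no_payoff_gap:
  assumes U: "open U" "prob_simplex \<subseteq> U" and smooth: "smooth_on_pd U \<Phi>"
    and xs: "xs \<in> prob_simplex"
    and recur: "\<forall>\<delta>>0. \<forall>T>0. \<exists>a\<ge>0. \<forall>t\<in>{a..a+T}. \<forall>\<alpha>. \<bar>x t $ \<alpha> - xs $ \<alpha>\<bar> < \<delta>"
    and supp: "0 < xs $ \<alpha>" "0 < xs $ \<beta>"
  shows "\<not> pdiff \<beta> \<Phi> xs < pdiff \<alpha> \<Phi> xs"
proof
  assume gap: "pdiff \<beta> \<Phi> xs < pdiff \<alpha> \<Phi> xs"
  define c where "c = pdiff \<alpha> \<Phi> xs - pdiff \<beta> \<Phi> xs"
  define m where "m = min (xs $ \<alpha>) (xs $ \<beta>) / 2"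
  have "0 < c" "0 < m" "m \<le> 1"
    using gap supp prob_simplex_nth_le_one[OF xs, of \<alpha>] by (auto simp: c_def m_def)
  obtain L2 U2 U3 where "0 < L2" "0 < U3" and \<theta>_bounds: "\<And>s. m \<le> s \<Longrightarrow> s \<le> 1 \<Longrightarrow>
      L2 \<le> (deriv ^^ 2) \<theta> s \<and> (deriv ^^ 2) \<theta> s \<le> U2 \<and> \<bar>(deriv ^^ 3) \<theta> s\<bar> \<le> U3"
    using kernel_bounds_on_interval[OF kernel \<open>0 < m\<close> \<open>m \<le> 1\<close>] by metis
  have "0 \<le> U2"
    using \<theta>_bounds[OF order.refl \<open>m \<le> 1\<close>] \<open>0 < L2\<close> by linarith
  obtain \<delta>\<^sub>\<Phi> V where "0 < \<delta>\<^sub>\<Phi>" "0 \<le> V" and payoffs: "\<And>y. (\<And>i. \<bar>y $ i - xs $ i\<bar> < \<delta>\<^sub>\<Phi>) \<Longrightarrow>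
      (\<forall>g. \<bar>pdiff g \<Phi> y\<bar> \<le> V) \<and> c / 2 \<le> pdiff \<alpha> \<Phi> y - pdiff \<beta> \<Phi> y"
    using pdiff_bounds_near[OF smooth U(1) subsetD[OF U(2) xs] gap] unfolding c_def by metis
  define A where "A = 2 * V / L2 + \<eta> / 2"
  define B where "B = U3 / (2 * L2) + \<eta> / 2"
  obtain \<epsilon> where "0 < \<epsilon>" and small: "U3 * \<epsilon>\<^sup>2 + 2 * \<eta> * U2 * \<epsilon> \<le> c / 4"
    using exists_pos_quadratic_le[of U3 "2 * \<eta> * U2" "c / 4"] \<open>0 < U3\<close> \<open>0 \<le> U2\<close> \<open>0 < c\<close> eta_nonneg
    by fastforce
  have "0 \<le> A"
    using \<open>0 \<le> V\<close> \<open>0 < L2\<close> eta_nonneg by (simp add: A_def)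
  then obtain h \<rho> where "0 < h" "0 < \<rho>" and scales: "exp B * (\<rho> / h + A * h / 2) \<le> \<epsilon>"
    using exists_scales_le[OF _ exp_gt_zero \<open>0 < \<epsilon>\<close>] by blast
  define T where "T = 4 * h + 16 * U2 * \<epsilon> / c + 1"
  have "0 < T" "4 * h \<le> T"
    using \<open>0 < h\<close> \<open>0 \<le> U2\<close> \<open>0 < \<epsilon>\<close> \<open>0 < c\<close> by (simp_all add: T_def add_pos_nonneg)
  define \<delta> where "\<delta> = min (\<rho> / 2) (min \<delta>\<^sub>\<Phi> m)"
  have "0 < \<delta>"
    using \<open>0 < \<rho>\<close> \<open>0 < \<delta>\<^sub>\<Phi>\<close> \<open>0 < m\<close> by (simp add: \<delta>_def)
  from recur[rule_format, OF this \<open>0 < T\<close>] obtain a where "0 \<le> a"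
    and close: "\<And>t i. t \<in> {a..a+T} \<Longrightarrow> \<bar>x t $ i - xs $ i\<bar> < \<delta>"
    by blast
  have "c / 4 * (T - 4 * h) \<le> 4 * U2 * \<epsilon>"
  proof (rule payoff_gap_window_bound[OF \<open>0 \<le> a\<close> \<open>0 < h\<close> \<open>4 * h \<le> T\<close> \<open>0 < L2\<close> \<open>0 < U3\<close> \<open>0 \<le> V\<close>
        _ _ _ scales[unfolded A_def B_def] small])
    fix t g assume t: "t \<in> {a..a+T}" and "g \<in> {\<alpha>, \<beta>}"
    then have "\<bar>x t $ g - xs $ g\<bar> < m" "2 * m \<le> xs $ g"
      using close[OF t, of g] by (auto simp: \<delta>_def m_def)
    with x_le_one[of t g] t \<open>0 \<le> a\<close> show "L2 \<le> (deriv ^^ 2) \<theta> (x t $ g) \<and>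
        (deriv ^^ 2) \<theta> (x t $ g) \<le> U2 \<and> \<bar>(deriv ^^ 3) \<theta> (x t $ g)\<bar> \<le> U3"
      by (intro \<theta>_bounds) (auto simp: abs_less_iff)
  next
    fix t assume "t \<in> {a..a+T}"
    then show "(\<forall>b. \<bar>pdiff b \<Phi> (x t)\<bar> \<le> V) \<and> c / 2 \<le> pdiff \<alpha> \<Phi> (x t) - pdiff \<beta> \<Phi> (x t)"
      using close by (intro payoffs) (simp add: \<delta>_def)
  next
    fix s t g assume "s \<in> {a..a+T}" "t \<in> {a..a+T}"
    then have "\<bar>x s $ g - xs $ g\<bar> < \<rho> / 2" "\<bar>x t $ g - xs $ g\<bar> < \<rho> / 2"
      using close by (simp_all add: \<delta>_def)
    then show "\<bar>x s $ g - x t $ g\<bar> \<le> \<rho>"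
      unfolding abs_less_iff abs_le_iff by argo
  qed
  then show False
    using \<open>0 < c\<close> mult_pos_pos[OF \<open>0 < c\<close> \<open>0 < c\<close>] by (simp add: T_def field_simps)
qed

end

theorem proposition4p1:
  fixes \<theta> :: "real \<Rightarrow> real"
    and \<Phi> :: "real ^ 'n \<Rightarrow> real"
    and U :: "(real ^ 'n) set"
    and \<eta> :: real
    and x xd :: "real \<Rightarrow> real ^ 'n"
    and xs :: "real ^ 'n"
  assumes n: "CARD('n) \<ge> 2"
    and ker: "kernel \<theta>"
    and U: "open U" "prob_simplex \<subseteq> U"
    and smooth: "smooth_on_pd U \<Phi>"
    and lip: "\<exists>C. C-lipschitz_on U \<Phi>"
    and eta: "\<eta> \<ge> 0"
    and interior: "\<forall>t\<ge>0. x t \<in> prob_simplex_interior"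
    and dx: "\<forall>t\<ge>0. (x has_vector_derivative xd t) (at t within {0..})"
    and ddx: "\<forall>t\<ge>0. (xd has_vector_derivative ID_rhs \<theta> \<Phi> \<eta> (x t) (xd t)) (at t within {0..})"
    and xs: "xs \<in> prob_simplex"
    and recur: "\<forall>\<delta>>0. \<forall>T>0. \<exists>a\<ge>0. \<forall>t\<in>{a..a+T}. \<forall>\<alpha>. \<bar>x t $ \<alpha> - xs $ \<alpha>\<bar> < \<delta>"
  shows "\<forall>\<alpha> \<beta>. xs $ \<alpha> > 0 \<longrightarrow> xs $ \<beta> > 0 \<longrightarrow> pdiff \<alpha> \<Phi> xs = pdiff \<beta> \<Phi> xs"
proof (intro allI impI)
  interpret ID_trajectory \<theta> \<Phi> \<eta> x xd
    using ker eta interior dx ddx by unfold_locales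
  fix \<alpha> \<beta> assume "xs $ \<alpha> > 0" "xs $ \<beta> > 0"
  with recurrent_point_no_payoff_gap[OF U smooth xs recur]
  have "\<not> pdiff \<beta> \<Phi> xs < pdiff \<alpha> \<Phi> xs" "\<not> pdiff \<alpha> \<Phi> xs < pdiff \<beta> \<Phi> xs"
    by blast+
  then show "pdiff \<alpha> \<Phi> xs = pdiff \<beta> \<Phi> xs"
    by linarith
qed

end
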